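(* Let $a>0$, $R>0$. Let $(\mathbf{x}^\circ,\mathbf{y}_1^\circ,\mathbf{y}_2^\circ)\in\mathcal{S}_R^3$ satisfy $\mathbf{y}_1^\circ-\mathbf{x}^\circ=-(\mathbf{y}_2^\circ-\mathbf{x}^\circ)$. Let $\ell>0$, let $\mathbf{e}_\perp$ be a unit vector orthogonal to $\mathbf{y}_1^\circ-\mathbf{x}^\circ$, and set $\boldsymbol{\Delta}=\ell\mathbf{e}_\perp$. Then there exist $T>0$ and a control $\mathbf{u}\in L^\infty([0,T];\mathbb{R}^3)$ such that the solution of $$\dot{\mathbf{x}}=\mathbf{u},\qquad \dot{\mathbf{y}}_j=\frac{3a}{4}\left(\frac{I}{\|\mathbf{d}_j\|}+\frac{\mathbf{d}_j\otimes\mathbf{d}_j}{\|\mathbf{d}_j\|^3}\right)\mathbf{u},\quad \mathbf{d}_j=\mathbf{y}_j-\mathbf{x},\ j=1,2,$$ starting at $(\mathbf{x}^\circ,\mathbf{y}_1^\circ,\mathbf{y}_2^\circ)$ remains in $\mathcal{S}_R^3$ on $[0,T]$ and reaches $(\mathbf{x}^\circ+\boldsymbol{\Delta},\mathbf{y}_1^\circ+\boldsymbol{\Delta},\mathbf{y}_2^\circ+\boldsymbol{\Delta})$ at time $T$.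
   Context: The model describes one active sphere of radius $a$ at $\mathbf{x}(t)\in\mathbb{R}^3$ with velocity the control $\mathbf{u}$, and two passive point particles at $\mathbf{y}_1,\mathbf{y}_2$ advected by its far-field Stokeslet flow; $I$ is the $3\times 3$ identity. For $R>0$, $\mathcal{S}_R^3$ is the set of triples of points of $\mathbb{R}^3$ whose pairwise distances all exceed $R$ (well-separated configurations). *)

theory Defs
  imports "HOL-Analysis.Analysis"
begin

type_synonym vec3 = "real ^ 3"

definition sepR :: "real \<Rightarrow> vec3 \<Rightarrow> vec3 \<Rightarrow> vec3 \<Rightarrow> bool" where
  "sepR R x y1 y2 \<longleftrightarrow> dist x y1 > R \<and> dist x y2 > R \<and> dist y1 y2 > R"

definition stokeslet :: "real \<Rightarrow> vec3 \<Rightarrow> vec3 \<Rightarrow> vec3" where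
  "stokeslet a d u = (3 * a / 4) *\<^sub>R ((1 / norm d) *\<^sub>R u + ((d \<bullet> u) / norm d ^ 3) *\<^sub>R d)"

end

(* The passive particles are kept on a lifted frame: with n the unit vector from x to y1 at the
   start and a shape vector p orthogonal to n, the configuration is
   (x, x + lam(|p|^2) (p + n), x + lam(|p|^2) (p - n)), so that |y_j - x| = rho(|p|^2) with
   rho(z) = lam(z) sqrt(1 + z).  For the right profile rho and G = lam rho / (c - rho), c = 3a/4,
   the control u = G(|p|^2) p' moves the passive particles along the Stokeslet flow for every path p,
   and the swimmer is displaced by the line integral of G(|p|^2) dp.  Along the loop that goes
   radially out to radius tau in direction theta, along the circle to direction -theta and radially
   back, this displacement is 2 sin theta (int_0^tau G(s^2) ds - tau G(tau^2)) e, which is nonzero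
   for small tau because G is strictly monotone near 0.  Repeating the loop with sin theta tuned gives
   the translation l e.  When rho0 = c the Stokeslet fixes e and a rigid translation suffices. *)

theory Submission
  imports Defs "HOL-Analysis.Cross3"
begin

section \<open>Controlled trajectories\<close>

definition controlled_traj ::
    "real \<Rightarrow> real \<Rightarrow> real \<Rightarrow> (real \<Rightarrow> vec3) \<Rightarrow> (real \<Rightarrow> vec3) \<Rightarrow> (real \<Rightarrow> vec3) \<Rightarrow> (real \<Rightarrow> vec3) \<Rightarrow> bool" where
  "controlled_traj a R T u x y1 y2 \<longleftrightarrow> T \<ge> 0 \<and> (\<exists>B. \<forall>t\<in>{0..T}. norm (u t) \<le> B) \<and>
     (\<forall>t\<in>{0..T}.
        (u has_integral (x t - x 0)) {0..t} \<and>
        ((\<lambda>s. stokeslet a (y1 s - x s) (u s)) has_integral (y1 t - y1 0)) {0..t} \<and>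
        ((\<lambda>s. stokeslet a (y2 s - x s) (u s)) has_integral (y2 t - y2 0)) {0..t} \<and>
        sepR R (x t) (y1 t) (y2 t))"

type_synonym config = "vec3 \<times> vec3 \<times> vec3"

definition reachable :: "real \<Rightarrow> real \<Rightarrow> real \<Rightarrow> config \<Rightarrow> config \<Rightarrow> bool" where
  "reachable a R T P P' \<longleftrightarrow> (\<exists>u x y1 y2. controlled_traj a R T u x y1 y2 \<and>
     (x 0, y1 0, y2 0) = P \<and> (x T, y1 T, y2 T) = P')"

definition glue :: "real \<Rightarrow> (real \<Rightarrow> 'a) \<Rightarrow> (real \<Rightarrow> 'a) \<Rightarrow> real \<Rightarrow> 'a" where
  "glue T f g t = (if t \<le> T then f t else g (t - T))"

lemma has_integral_glue:
  fixes f g F G :: "real \<Rightarrow> 'a::banach"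
  assumes "0 \<le> T"
    and f: "\<And>t. t \<in> {0..T} \<Longrightarrow> (f has_integral (F t - F 0)) {0..t}"
    and g: "\<And>t. t \<in> {0..T'} \<Longrightarrow> (g has_integral (G t - G 0)) {0..t}"
    and "G 0 = F T" and t: "t \<in> {0..T + T'}"
  shows "(glue T f g has_integral (glue T F G t - glue T F G 0)) {0..t}"
proof (cases "t \<le> T")
  case True
  have "(glue T f g has_integral (F t - F 0)) {0..t}"
    by (rule has_integral_eq[OF _ f]) (use True t in \<open>auto simp: glue_def\<close>)
  then show ?thesis
    using True \<open>0 \<le> T\<close> by (simp add: glue_def)
next
  case False
  have "(glue T f g has_integral (F T - F 0)) {0..T}"
    by (rule has_integral_eq[OF _ f]) (use \<open>0 \<le> T\<close> in \<open>auto simp: glue_def\<close>)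
  moreover have "(glue T f g has_integral (G (t - T) - G 0)) {T..t}"
  proof -
    have "((\<lambda>s. g (s - T)) has_integral (G (t - T) - G 0)) {T..t}"
      using has_integral_shift_real_ivl[OF g[of "t - T"], of "- T"] False t by simp
    then show ?thesis
      by (rule has_integral_spike_finite[of "{T}", rotated 2]) (auto simp: glue_def)
  qed
  ultimately have "(glue T f g has_integral (F T - F 0 + (G (t - T) - G 0))) {0..t}"
    using False \<open>0 \<le> T\<close> by (intro has_integral_combine) auto
  then show ?thesis
    using False \<open>0 \<le> T\<close> \<open>G 0 = F T\<close> by (simp add: glue_def)
qed

lemma controlled_traj_glue:
  assumes traj: "controlled_traj a R T u x y1 y2" and traj': "controlled_traj a R T' u' x' y1' y2'"
    and "x' 0 = x T" "y1' 0 = y1 T" "y2' 0 = y2 T"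
  shows "controlled_traj a R (T + T') (glue T u u') (glue T x x') (glue T y1 y1') (glue T y2 y2')"
  unfolding controlled_traj_def
proof (intro conjI ballI)
  have "0 \<le> T" "0 \<le> T'"
    using traj traj' by (auto simp: controlled_traj_def)
  then show "0 \<le> T + T'"
    by simp
  obtain B B' where "\<forall>t\<in>{0..T}. norm (u t) \<le> B" "\<forall>t\<in>{0..T'}. norm (u' t) \<le> B'"
    using traj traj' by (auto simp: controlled_traj_def)
  then have "\<forall>t\<in>{0..T + T'}. norm (glue T u u' t) \<le> max B B'"
    by (auto simp: glue_def intro: max.coboundedI1 max.coboundedI2)
  then show "\<exists>B. \<forall>t\<in>{0..T + T'}. norm (glue T u u' t) \<le> B" ..
  fix t assume t: "t \<in> {0..T + T'}"
  show "(glue T u u' has_integral (glue T x x' t - glue T x x' 0)) {0..t}"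
    by (rule has_integral_glue[OF \<open>0 \<le> T\<close> _ _ _ t]) (use assms in \<open>auto simp: controlled_traj_def\<close>)
  have "(\<lambda>s. stokeslet a (glue T y1 y1' s - glue T x x' s) (glue T u u' s))
      = glue T (\<lambda>s. stokeslet a (y1 s - x s) (u s)) (\<lambda>s. stokeslet a (y1' s - x' s) (u' s))"
    by (auto simp: glue_def)
  moreover have "(\<dots> has_integral (glue T y1 y1' t - glue T y1 y1' 0)) {0..t}"
    by (rule has_integral_glue[OF \<open>0 \<le> T\<close> _ _ _ t]) (use assms in \<open>auto simp: controlled_traj_def\<close>)
  ultimately show "((\<lambda>s. stokeslet a (glue T y1 y1' s - glue T x x' s) (glue T u u' s)) has_integral
      (glue T y1 y1' t - glue T y1 y1' 0)) {0..t}"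
    by simp
  have "(\<lambda>s. stokeslet a (glue T y2 y2' s - glue T x x' s) (glue T u u' s))
      = glue T (\<lambda>s. stokeslet a (y2 s - x s) (u s)) (\<lambda>s. stokeslet a (y2' s - x' s) (u' s))"
    by (auto simp: glue_def)
  moreover have "(\<dots> has_integral (glue T y2 y2' t - glue T y2 y2' 0)) {0..t}"
    by (rule has_integral_glue[OF \<open>0 \<le> T\<close> _ _ _ t]) (use assms in \<open>auto simp: controlled_traj_def\<close>)
  ultimately show "((\<lambda>s. stokeslet a (glue T y2 y2' s - glue T x x' s) (glue T u u' s)) has_integral
      (glue T y2 y2' t - glue T y2 y2' 0)) {0..t}"
    by simp
  show "sepR R (glue T x x' t) (glue T y1 y1' t) (glue T y2 y2' t)"
    using traj traj' t \<open>0 \<le> T\<close> by (auto simp: controlled_traj_def glue_def)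
qed

lemma reachable_trans:
  assumes "reachable a R T P Q" and "reachable a R T' Q S"
  shows "reachable a R (T + T') P S"
proof -
  obtain u x y1 y2 where traj: "controlled_traj a R T u x y1 y2"
    and "(x 0, y1 0, y2 0) = P" "(x T, y1 T, y2 T) = Q"
    using assms(1) by (auto simp: reachable_def)
  moreover obtain u' x' y1' y2' where traj': "controlled_traj a R T' u' x' y1' y2'"
    and "(x' 0, y1' 0, y2' 0) = Q" "(x' T', y1' T', y2' T') = S"
    using assms(2) by (auto simp: reachable_def)
  moreover have "0 \<le> T" "0 \<le> T'"
    using traj traj' by (auto simp: controlled_traj_def)
  ultimately show ?thesis
    unfolding reachable_def
    by (intro exI[of _ "glue T u u'"] exI[of _ "glue T x x'"] exI[of _ "glue T y1 y1'"]
        exI[of _ "glue T y2 y2'"] conjI controlled_traj_glue) (auto simp: glue_def)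
qed

lemma reachable_translate:
  assumes "reachable a R T P P'"
  shows "reachable a R T (P + (v, v, v)) (P' + (v, v, v))"
proof -
  obtain u x y1 y2 where "controlled_traj a R T u x y1 y2"
    and "(x 0, y1 0, y2 0) = P" "(x T, y1 T, y2 T) = P'"
    using assms by (auto simp: reachable_def)
  then have "controlled_traj a R T u (\<lambda>t. x t + v) (\<lambda>t. y1 t + v) (\<lambda>t. y2 t + v)
      \<and> (x 0 + v, y1 0 + v, y2 0 + v) = P + (v, v, v) \<and> (x T + v, y1 T + v, y2 T + v) = P' + (v, v, v)"
    by (auto simp: controlled_traj_def sepR_def dist_add_cancel2)
  then show ?thesis
    unfolding reachable_def by blast
qed

lemma reachable_repeat:
  assumes "reachable a R T P (P + (v, v, v))"
  shows "reachable a R (real (Suc n) * T) P (P + real (Suc n) *\<^sub>R (v, v, v))"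
proof (induction n)
  case 0
  then show ?case
    using assms by simp
next
  case (Suc n)
  let ?w = "real (Suc n) *\<^sub>R v"
  have "reachable a R T (P + (?w, ?w, ?w)) (P + (v, v, v) + (?w, ?w, ?w))"
    using reachable_translate[OF assms] .
  with Suc.IH have "reachable a R (real (Suc n) * T + T) P (P + (v, v, v) + (?w, ?w, ?w))"
    by (intro reachable_trans) auto
  moreover have "real (Suc (Suc n)) *\<^sub>R (v, v, v) = (v, v, v) + (?w, ?w, ?w)"
    by (simp only: of_nat_Suc[of "Suc n"] scaleR_add_left scaleR_one scaleR_Pair add_Pair)
  moreover have "real (Suc n) * T + T = real (Suc (Suc n)) * T"
    by (simp add: algebra_simps)
  ultimately show ?case
    by (simp only: add.assoc)
qed

lemma reachable_rigid_translation:
  assumes "sepR R x y1 y2" and "stokeslet a (y1 - x) e = e" and "stokeslet a (y2 - x) e = e" and "0 \<le> T"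
  shows "reachable a R T (x, y1, y2) ((x, y1, y2) + (T *\<^sub>R e, T *\<^sub>R e, T *\<^sub>R e))"
proof -
  have "controlled_traj a R T (\<lambda>t. e) (\<lambda>t. x + t *\<^sub>R e) (\<lambda>t. y1 + t *\<^sub>R e) (\<lambda>t. y2 + t *\<^sub>R e)"
    unfolding controlled_traj_def
  proof (intro conjI ballI exI)
    fix t assume "t \<in> {0..T}"
    then have "((\<lambda>s. e) has_integral t *\<^sub>R e) {0..t}"
      using has_integral_const_real[of e 0 t] by simp
    then show "((\<lambda>s. e) has_integral (x + t *\<^sub>R e - (x + 0 *\<^sub>R e))) {0..t}"
      and "((\<lambda>s. stokeslet a (y1 + s *\<^sub>R e - (x + s *\<^sub>R e)) e) has_integral
        (y1 + t *\<^sub>R e - (y1 + 0 *\<^sub>R e))) {0..t}"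
      and "((\<lambda>s. stokeslet a (y2 + s *\<^sub>R e - (x + s *\<^sub>R e)) e) has_integral
        (y2 + t *\<^sub>R e - (y2 + 0 *\<^sub>R e))) {0..t}"
      using assms(2,3) by simp_all
    show "sepR R (x + t *\<^sub>R e) (y1 + t *\<^sub>R e) (y2 + t *\<^sub>R e)"
      using assms(1) by (simp add: sepR_def dist_add_cancel2)
  qed (use assms(4) in auto)
  then show ?thesis
    unfolding reachable_def by fastforce
qed

section \<open>Passive particles on a lifted frame\<close>

lemma stokeslet_lifted_frame:
  fixes p p' q :: vec3
  assumes q: "norm q = 1" "q \<bullet> p = 0" "q \<bullet> p' = 0"
    and lam: "0 < lam" and rho: "rho = lam * sqrt (1 + p \<bullet> p)"
    and c: "c = 3 * a / 4" and G: "G * (c - rho) = lam * rho"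
  shows "stokeslet a (lam *\<^sub>R (p + q)) (G *\<^sub>R p')
    = G *\<^sub>R p' + lam *\<^sub>R p' + (c * lam\<^sup>2 * G * (p \<bullet> p') / rho ^ 3) *\<^sub>R (p + q)"
proof -
  have "(p + q) \<bullet> (p + q) = 1 + p \<bullet> p"
    using q by (simp add: inner_add_left inner_add_right inner_commute norm_eq_1)
  then have norm_d: "norm (lam *\<^sub>R (p + q)) = rho"
    using lam rho by (simp add: norm_eq_sqrt_inner[of "p + q"])
  have rho_pos: "0 < rho"
    using lam rho by (simp add: add_pos_nonneg)
  have dot: "(lam *\<^sub>R (p + q)) \<bullet> (G *\<^sub>R p') = lam * G * (p \<bullet> p')"
    using q by (simp add: inner_add_left inner_add_right inner_commute)
  have "c * G / rho = G + lam"
    using G rho_pos by (simp add: field_simps)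
  then show ?thesis
    unfolding stokeslet_def norm_d dot c[symmetric]
    by (simp add: scaleR_add_right algebra_simps power2_eq_square)
qed

lemma sqrt_one_plus_has_derivative:
  "0 \<le> z \<Longrightarrow> ((\<lambda>z. sqrt (1 + z)) has_real_derivative inverse (sqrt (1 + z)) / 2) (at z)"
  by (auto intro!: derivative_eq_intros)

lemma isCont_eventually_greater:
  fixes f :: "'a::t2_space \<Rightarrow> 'b::linorder_topology"
  assumes "isCont f x" and "b < f x"
  shows "\<forall>\<^sub>F y in nhds x. b < f y"
  using assms(1) unfolding isCont_def tendsto_at_iff_tendsto_nhds
  by (rule order_tendstoD(1)) (fact assms(2))

locale stokes_loop =
  fixes a R \<rho>\<^sub>0 :: real and n :: vec3
  assumes a_pos: "0 < a" and R_pos: "0 < R" and R_less_\<rho>\<^sub>0: "R < \<rho>\<^sub>0"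
    and \<rho>\<^sub>0_noncritical: "\<rho>\<^sub>0 \<noteq> 3 * a / 4" and n_unit: "norm n = 1"
begin

definition "c = 3 * a / 4"
definition "A = (\<rho>\<^sub>0 - c)\<^sup>2"
definition "Q = \<rho>\<^sub>0 * (2 * c - \<rho>\<^sub>0)"
text \<open>The matching condition lam' = c lam^2 G / (2 rho^3) of stokeslet_lifted_frame
  is a separable ODE for rho with first integral rho (2 c - rho) = Q (1 + z), i.e.
  (rho - c)^2 = A - Q z; the sign selects the branch through rho 0 = rho0.\<close>
definition "rho z = c + sgn (\<rho>\<^sub>0 - c) * sqrt (A - Q * z)"
definition "lam z = rho z / sqrt (1 + z)"
definition "G z = lam z * rho z / (c - rho z)"
definition "admissible z \<longleftrightarrow> 0 \<le> z \<and> Q * z < A \<and> R < rho z \<and> R < 2 * lam z"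

lemma c_pos: "0 < c"
  using a_pos by (simp add: c_def)

lemma sgn_sq: "sgn (\<rho>\<^sub>0 - c) * sgn (\<rho>\<^sub>0 - c) = 1"
  using \<rho>\<^sub>0_noncritical by (simp add: c_def sgn_if)

lemma rho_0: "rho 0 = \<rho>\<^sub>0"
  by (simp add: rho_def A_def sgn_mult_abs)

lemma lam_0: "lam 0 = \<rho>\<^sub>0"
  by (simp add: lam_def rho_0)

lemma rho_minus_c_sq: "Q * z \<le> A \<Longrightarrow> (rho z - c)\<^sup>2 = A - Q * z"
  using sgn_sq by (simp add: rho_def power_mult_distrib power2_eq_square[of "sgn _"])

lemma rho_ne_c: "Q * z < A \<Longrightarrow> rho z \<noteq> c"
  using \<rho>\<^sub>0_noncritical by (auto simp: rho_def c_def sgn_if)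

lemma Q_mult_one_plus: "Q * z \<le> A \<Longrightarrow> Q * (1 + z) = rho z * (2 * c - rho z)"
  using rho_minus_c_sq[of z] by (simp add: A_def Q_def power2_eq_square algebra_simps)

lemma admissible_rho_pos: "admissible z \<Longrightarrow> 0 < rho z"
  using R_pos by (simp add: admissible_def)

lemma admissible_lam_pos: "admissible z \<Longrightarrow> 0 < lam z"
  using admissible_rho_pos by (simp add: admissible_def lam_def add_nonneg_pos)

lemma admissible_rho_eq: "admissible z \<Longrightarrow> rho z = lam z * sqrt (1 + z)"
  by (simp add: admissible_def lam_def add_nonneg_pos)

lemma admissible_G_eq: "admissible z \<Longrightarrow> G z * (c - rho z) = lam z * rho z"
  using rho_ne_c[of z] by (simp add: admissible_def G_def)

lemma isCont_rho: "isCont rho z"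
  unfolding rho_def by (intro continuous_intros)

lemma rho_has_derivative:
  assumes "Q * z < A"
  shows "(rho has_real_derivative Q / (2 * (c - rho z))) (at z)"
proof -
  have "(rho has_real_derivative sgn (\<rho>\<^sub>0 - c) * (- Q / (2 * sqrt (A - Q * z)))) (at z)"
    unfolding rho_def[abs_def] using assms
    by (auto intro!: derivative_eq_intros simp: field_simps)
  moreover have "sgn (\<rho>\<^sub>0 - c) * (- Q / (2 * sqrt (A - Q * z))) = Q / (2 * (c - rho z))"
    using sgn_sq assms by (auto simp: rho_def sgn_if field_simps)
  ultimately show ?thesis
    by simp
qed

lemma lam_has_derivative:
  assumes z: "admissible z"
  shows "(lam has_real_derivative c * (lam z)\<^sup>2 * G z / (2 * rho z ^ 3)) (at z)"
proof -
  define w where "w = sqrt (1 + z)"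
  have w: "0 < w" "w * w = 1 + z"
    using z by (auto simp: w_def admissible_def add_nonneg_pos)
  have "(lam has_real_derivative (Q / (2 * (c - rho z)) * w - rho z * (inverse w / 2)) / (w * w)) (at z)"
    unfolding lam_def[abs_def] w_def
    by (rule DERIV_divide[OF rho_has_derivative sqrt_one_plus_has_derivative])
      (use z w in \<open>auto simp: admissible_def w_def\<close>)
  moreover have "(Q / (2 * (c - rho z)) * w - rho z * (inverse w / 2)) / (w * w)
      = c * (lam z)\<^sup>2 * G z / (2 * rho z ^ 3)"
  proof -
    define r where "r = rho z"
    have r: "0 < r" "c - r \<noteq> 0"
      using rho_ne_c[of z] admissible_rho_pos[OF z] z by (auto simp: admissible_def r_def)
    have Q: "Q = r * (2 * c - r) / (w * w)"
      using Q_mult_one_plus[of z] z w by (simp add: admissible_def field_simps r_def)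
    have lam: "lam z = r / w" and G: "G z = r / w * r / (c - r)"
      by (simp_all add: G_def lam_def w_def r_def)
    show ?thesis
      unfolding r_def[symmetric] Q lam G using w(1) r
      by (simp add: divide_simps power2_eq_square power3_eq_cube) (simp add: algebra_simps)
  qed
  ultimately show ?thesis
    by simp
qed

definition "G' z = c * (rho z)\<^sup>2 * (3 * c - 2 * rho z) / (2 * sqrt (1 + z) ^ 3 * (c - rho z) ^ 3)"

lemma G_has_derivative:
  assumes z: "admissible z"
  shows "(G has_real_derivative G' z) (at z)"
proof -
  define w where "w = sqrt (1 + z)"
  have w: "0 < w" "w * w = 1 + z"
    using z by (auto simp: w_def admissible_def add_nonneg_pos)
  have Qz: "Q * z < A" and ne: "c - rho z \<noteq> 0" and pos: "0 < rho z"
    using rho_ne_c[of z] admissible_rho_pos[OF z] z by (auto simp: admissible_def)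
  let ?rho' = "Q / (2 * (c - rho z))" and ?lam' = "c * (lam z)\<^sup>2 * G z / (2 * rho z ^ 3)"
  have G_eq: "(\<lambda>z. lam z * rho z / (c - rho z)) = G"
    by (simp add: fun_eq_iff G_def)
  have "(G has_real_derivative
      ((?lam' * rho z + ?rho' * lam z) * (c - rho z) - lam z * rho z * (0 - ?rho'))
        / ((c - rho z) * (c - rho z))) (at z)"
    using DERIV_divide[OF DERIV_mult[OF lam_has_derivative[OF z] rho_has_derivative[OF Qz]]
        DERIV_diff[OF DERIV_const rho_has_derivative[OF Qz]] ne]
    unfolding G_eq .
  moreover have "((?lam' * rho z + ?rho' * lam z) * (c - rho z) - lam z * rho z * (0 - ?rho'))
      / ((c - rho z) * (c - rho z)) = G' z"
  proof -
    define r where "r = rho z"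
    have r: "0 < r" "c - r \<noteq> 0"
      using ne pos by (auto simp: r_def)
    have Q: "Q = r * (2 * c - r) / (w * w)"
      using Q_mult_one_plus[of z] z w by (simp add: admissible_def field_simps r_def)
    have lam: "lam z = r / w" and G: "G z = r / w * r / (c - r)"
      and G': "G' z = c * r\<^sup>2 * (3 * c - 2 * r) / (2 * w ^ 3 * (c - r) ^ 3)"
      by (simp_all add: G_def G'_def lam_def w_def r_def)
    show ?thesis
      unfolding r_def[symmetric] Q lam G G' using w(1) r
      by (simp add: divide_simps power2_eq_square power3_eq_cube) (simp add: algebra_simps)
  qed
  ultimately show ?thesis
    by simp
qed

lemma continuous_on_G: "continuous_on {z. 0 \<le> z \<and> Q * z < A} G"
proof -
  have "continuous_on {z. 0 \<le> z \<and> Q * z < A}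
      (\<lambda>z. rho z / sqrt (1 + z) * rho z / (c - rho z))"
    unfolding rho_def using rho_ne_c by (intro continuous_intros) (auto simp: rho_def)
  then show ?thesis
    unfolding G_def[abs_def] lam_def .
qed

lemma norm_lifted_frame:
  fixes p q :: vec3
  assumes "admissible (p \<bullet> p)" and "norm q = 1" "q \<bullet> p = 0"
  shows "norm (lam (p \<bullet> p) *\<^sub>R (p + q)) = rho (p \<bullet> p)"
proof -
  have "(p + q) \<bullet> (p + q) = 1 + p \<bullet> p"
    using assms by (simp add: inner_add_left inner_add_right inner_commute norm_eq_1)
  then show ?thesis
    using admissible_lam_pos[OF assms(1)] admissible_rho_eq[OF assms(1)]
    by (simp add: norm_eq_sqrt_inner[of "p + q"])
qed

lemma lifted_frame_has_derivative:
  fixes p :: "real \<Rightarrow> vec3" and p' q :: vec3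
  assumes p: "(p has_vector_derivative p') (at t within S)"
    and z: "admissible (p t \<bullet> p t)"
    and q: "norm q = 1" "q \<bullet> p t = 0" "q \<bullet> p' = 0"
  shows "((\<lambda>s. lam (p s \<bullet> p s) *\<^sub>R (p s + q)) has_vector_derivative
      stokeslet a (lam (p t \<bullet> p t) *\<^sub>R (p t + q)) (G (p t \<bullet> p t) *\<^sub>R p') - G (p t \<bullet> p t) *\<^sub>R p')
    (at t within S)"
proof -
  let ?z = "p t \<bullet> p t"
  let ?lam' = "c * (lam ?z)\<^sup>2 * G ?z / (2 * rho ?z ^ 3)"
  have z': "((\<lambda>s. p s \<bullet> p s) has_real_derivative p t \<bullet> p' + p' \<bullet> p t) (at t within S)"
    unfolding has_real_derivative_iff_has_vector_derivative
    by (rule bounded_bilinear.has_vector_derivative[OF bounded_bilinear_inner p p])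
  have "((\<lambda>s. lam (p s \<bullet> p s)) has_real_derivative ?lam' * (2 * (p t \<bullet> p'))) (at t within S)"
    using DERIV_chain2[OF lam_has_derivative[OF z] z'] by (simp add: inner_commute)
  from has_vector_derivative_scaleR[OF this has_vector_derivative_add[OF p has_vector_derivative_const]]
  have "((\<lambda>s. lam (p s \<bullet> p s) *\<^sub>R (p s + q)) has_vector_derivative
      lam ?z *\<^sub>R p' + (c * (lam ?z)\<^sup>2 * G ?z * (p t \<bullet> p') / rho ?z ^ 3) *\<^sub>R (p t + q)) (at t within S)"
    by (simp add: algebra_simps)
  moreover have "stokeslet a (lam ?z *\<^sub>R (p t + q)) (G ?z *\<^sub>R p')
      = G ?z *\<^sub>R p' + lam ?z *\<^sub>R p' + (c * (lam ?z)\<^sup>2 * G ?z * (p t \<bullet> p') / rho ?z ^ 3) *\<^sub>R (p t + q)"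
    by (rule stokeslet_lifted_frame[OF q admissible_lam_pos[OF z] admissible_rho_eq[OF z] c_def
          admissible_G_eq[OF z]])
  ultimately show ?thesis
    by simp
qed

definition lifted_config :: "vec3 \<Rightarrow> vec3 \<Rightarrow> config" where
  "lifted_config X p = (X, X + lam (p \<bullet> p) *\<^sub>R (p + n), X + lam (p \<bullet> p) *\<^sub>R (p - n))"

lemma lifted_config_0: "lifted_config X 0 = (X, X + \<rho>\<^sub>0 *\<^sub>R n, X - \<rho>\<^sub>0 *\<^sub>R n)"
  by (simp add: lifted_config_def lam_0)

lemma lifted_config_translate: "lifted_config (X + v) p = lifted_config X p + (v, v, v)"
  by (simp add: lifted_config_def algebra_simps)

lemma sepR_lifted_config:
  assumes adm: "admissible (p \<bullet> p)" and "n \<bullet> p = 0"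
  shows "sepR R X (X + lam (p \<bullet> p) *\<^sub>R (p + n)) (X + lam (p \<bullet> p) *\<^sub>R (p - n))"
proof -
  have "norm (lam (p \<bullet> p) *\<^sub>R (p + n)) = rho (p \<bullet> p)" "norm (lam (p \<bullet> p) *\<^sub>R (p - n)) = rho (p \<bullet> p)"
    using norm_lifted_frame[OF adm, of n] norm_lifted_frame[OF adm, of "- n"] \<open>n \<bullet> p = 0\<close> n_unit
    by (simp_all add: inner_commute)
  moreover have "lam (p \<bullet> p) *\<^sub>R (p + n) - lam (p \<bullet> p) *\<^sub>R (p - n) = (2 * lam (p \<bullet> p)) *\<^sub>R n"
    by (simp add: scaleR_add_right scaleR_diff_right flip: scaleR_2 scaleR_scaleR)
  ultimately show ?thesis
    using adm admissible_lam_pos[OF adm] n_unit by (simp add: sepR_def dist_norm admissible_def)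
qed

lemma lifted_frame_has_integral:
  assumes p: "\<And>s. s \<in> {0..1} \<Longrightarrow> (p has_vector_derivative p' s) (at s within {0..1})"
    and x: "\<And>s. s \<in> {0..1} \<Longrightarrow> (x has_vector_derivative G (p s \<bullet> p s) *\<^sub>R p' s) (at s within {0..1})"
    and adm: "\<And>s. s \<in> {0..1} \<Longrightarrow> admissible (p s \<bullet> p s)"
    and q: "norm q = 1" "\<And>s. s \<in> {0..1} \<Longrightarrow> q \<bullet> p s = 0 \<and> q \<bullet> p' s = 0"
    and t: "t \<in> {0..1}"
  shows "((\<lambda>s. stokeslet a (lam (p s \<bullet> p s) *\<^sub>R (p s + q)) (G (p s \<bullet> p s) *\<^sub>R p' s)) has_integral
      (x t + lam (p t \<bullet> p t) *\<^sub>R (p t + q) - (x 0 + lam (p 0 \<bullet> p 0) *\<^sub>R (p 0 + q)))) {0..t}"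
proof (rule fundamental_theorem_of_calculus)
  fix s assume "s \<in> {0..t}"
  then have s: "s \<in> {0..1}"
    using t by auto
  from has_vector_derivative_add[OF x[OF s] lifted_frame_has_derivative[OF p[OF s] adm[OF s] q(1)]] q(2)[OF s]
  have "((\<lambda>s. x s + lam (p s \<bullet> p s) *\<^sub>R (p s + q)) has_vector_derivative
      stokeslet a (lam (p s \<bullet> p s) *\<^sub>R (p s + q)) (G (p s \<bullet> p s) *\<^sub>R p' s)) (at s within {0..1})"
    by simp
  then show "((\<lambda>s. x s + lam (p s \<bullet> p s) *\<^sub>R (p s + q)) has_vector_derivative
      stokeslet a (lam (p s \<bullet> p s) *\<^sub>R (p s + q)) (G (p s \<bullet> p s) *\<^sub>R p' s)) (at s within {0..t})"
    by (rule has_vector_derivative_within_subset) (use t in auto)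
qed (use t in auto)

lemma reachable_along_path:
  assumes p: "\<And>t. t \<in> {0..1} \<Longrightarrow> (p has_vector_derivative p' t) (at t within {0..1})"
    and p': "continuous_on {0..1} p'"
    and perp: "\<And>t. t \<in> {0..1} \<Longrightarrow> n \<bullet> p t = 0 \<and> n \<bullet> p' t = 0"
    and adm: "\<And>t. t \<in> {0..1} \<Longrightarrow> admissible (p t \<bullet> p t)"
    and F: "\<And>t. t \<in> {0..1} \<Longrightarrow> (F has_vector_derivative G (p t \<bullet> p t) *\<^sub>R p' t) (at t within {0..1})"
  shows "reachable a R 1 (lifted_config X (p 0)) (lifted_config (X + (F 1 - F 0)) (p 1))"
proof -
  define u where "u t = G (p t \<bullet> p t) *\<^sub>R p' t" for t
  define x where "x t = X + (F t - F 0)" for t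
  define d where "d q t = lam (p t \<bullet> p t) *\<^sub>R (p t + q)" for q t
  have x': "(x has_vector_derivative u s) (at s within {0..1})" if "s \<in> {0..1}" for s
    using has_vector_derivative_add[OF has_vector_derivative_const[of X]
        has_vector_derivative_diff[OF F[OF that] has_vector_derivative_const[of "F 0"]]]
    by (simp add: x_def[abs_def] u_def)
  have "controlled_traj a R 1 u x (\<lambda>t. x t + d n t) (\<lambda>t. x t + d (- n) t)"
    unfolding controlled_traj_def
  proof (intro conjI ballI)
    have "continuous_on {0..1} p"
      using p by (metis continuous_on_eq_continuous_within has_vector_derivative_continuous)
    then have "continuous_on {0..1} (\<lambda>t. G (p t \<bullet> p t))"
      using adm by (intro continuous_on_compose2[OF continuous_on_G])
        (auto intro!: continuous_intros simp: admissible_def)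
    then have "continuous_on {0..1} u"
      unfolding u_def using p' by (intro continuous_intros)
    then show "\<exists>B. \<forall>t\<in>{0..1}. norm (u t) \<le> B"
      by (metis continuous_on_compact_bound compact_Icc)
    fix t :: real assume t: "t \<in> {0..1}"
    show "(u has_integral (x t - x 0)) {0..t}"
      using t by (intro fundamental_theorem_of_calculus) (auto intro: has_vector_derivative_within_subset[OF x'])
    show "((\<lambda>s. stokeslet a (x s + d n s - x s) (u s)) has_integral (x t + d n t - (x 0 + d n 0))) {0..t}"
      using lifted_frame_has_integral[OF p x'[unfolded u_def] adm _ _ t, of n] n_unit perp
      by (simp add: d_def u_def inner_commute)
    show "((\<lambda>s. stokeslet a (x s + d (- n) s - x s) (u s)) has_integral
        (x t + d (- n) t - (x 0 + d (- n) 0))) {0..t}"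
      using lifted_frame_has_integral[OF p x'[unfolded u_def] adm _ _ t, of "- n"] n_unit perp
      by (simp add: d_def u_def inner_commute)
    show "sepR R (x t) (x t + d n t) (x t + d (- n) t)"
      using sepR_lifted_config[OF adm[OF t]] perp[OF t] by (simp add: d_def)
  qed simp
  then show ?thesis
    unfolding reachable_def lifted_config_def x_def d_def by fastforce
qed

section \<open>A net translation from a loop of shapes\<close>

definition "Gint r = integral {0..r} (\<lambda>s. G (s\<^sup>2))"

lemma continuous_on_G_sq:
  assumes "\<forall>z\<in>{0..\<tau>\<^sup>2}. admissible z"
  shows "continuous_on {0..\<tau>} (\<lambda>s. G (s\<^sup>2))"
proof (rule continuous_on_compose2[OF continuous_on_G])
  show "continuous_on {0..\<tau>} (\<lambda>s::real. s\<^sup>2)"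
    by (intro continuous_intros)
  show "(\<lambda>s::real. s\<^sup>2) ` {0..\<tau>} \<subseteq> {z. 0 \<le> z \<and> Q * z < A}"
    using assms by (auto simp: admissible_def intro!: power_mono)
qed

lemma Gint_has_derivative:
  assumes "\<forall>z\<in>{0..\<tau>\<^sup>2}. admissible z" and "s \<in> {0..\<tau>}"
  shows "(Gint has_real_derivative G (s\<^sup>2)) (at s within {0..\<tau>})"
  unfolding Gint_def has_real_derivative_iff_has_vector_derivative
  by (rule integral_has_vector_derivative[OF continuous_on_G_sq[OF assms(1)] assms(2)])

lemma reachable_radial:
  assumes adm: "\<forall>z\<in>{0..\<tau>\<^sup>2}. admissible z" and r: "r\<^sub>0 \<in> {0..\<tau>}" "r\<^sub>1 \<in> {0..\<tau>}"
    and v: "norm v = 1" "n \<bullet> v = 0"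
  shows "reachable a R 1 (lifted_config X (r\<^sub>0 *\<^sub>R v))
    (lifted_config (X + (Gint r\<^sub>1 - Gint r\<^sub>0) *\<^sub>R v) (r\<^sub>1 *\<^sub>R v))"
proof -
  define r where "r t = (1 - t) * r\<^sub>0 + t * r\<^sub>1" for t
  have r_range: "r t \<in> {0..\<tau>}" if "t \<in> {0..1}" for t
    using r that by (auto simp: r_def intro!: convex_bound_le)
  have r': "(r has_real_derivative r\<^sub>1 - r\<^sub>0) (at t within S)" for t S
    unfolding r_def by (auto intro!: derivative_eq_intros)
  have "reachable a R 1 (lifted_config X (r 0 *\<^sub>R v))
      (lifted_config (X + (Gint (r 1) *\<^sub>R v - Gint (r 0) *\<^sub>R v)) (r 1 *\<^sub>R v))"
  proof (rule reachable_along_path)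
    fix t :: real assume t: "t \<in> {0..1}"
    show "((\<lambda>t. r t *\<^sub>R v) has_vector_derivative (r\<^sub>1 - r\<^sub>0) *\<^sub>R v) (at t within {0..1})"
      using r' by (auto intro!: derivative_eq_intros)
    show "n \<bullet> (r t *\<^sub>R v) = 0 \<and> n \<bullet> ((r\<^sub>1 - r\<^sub>0) *\<^sub>R v) = 0"
      using v by simp
    have "(r t)\<^sup>2 \<in> {0..\<tau>\<^sup>2}"
      using r_range[OF t] by (auto intro: power_mono)
    then show "admissible (r t *\<^sub>R v \<bullet> r t *\<^sub>R v)"
      using adm v by (simp add: power2_eq_square norm_eq_1)
    have "(Gint has_real_derivative G ((r t)\<^sup>2)) (at (r t) within r ` {0..1})"
      by (rule DERIV_subset[OF Gint_has_derivative[OF adm r_range[OF t]]]) (use r_range in auto)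
    from DERIV_image_chain[OF this r']
    have "((\<lambda>t. Gint (r t)) has_real_derivative G ((r t)\<^sup>2) * (r\<^sub>1 - r\<^sub>0)) (at t within {0..1})"
      by (simp add: o_def)
    from has_vector_derivative_scaleR[OF this has_vector_derivative_const[of v]]
    show "((\<lambda>t. Gint (r t) *\<^sub>R v) has_vector_derivative
        G (r t *\<^sub>R v \<bullet> r t *\<^sub>R v) *\<^sub>R (r\<^sub>1 - r\<^sub>0) *\<^sub>R v) (at t within {0..1})"
      using v by (simp add: power2_eq_square norm_eq_1)
  qed (rule continuous_on_const)
  then show ?thesis
    by (simp add: r_def scaleR_diff_left)
qed

lemma reachable_arc:
  fixes e m :: vec3
  defines "w \<equiv> \<lambda>\<phi>. sin \<phi> *\<^sub>R e + cos \<phi> *\<^sub>R m"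
  assumes adm: "admissible (\<tau>\<^sup>2)"
    and em: "norm e = 1" "norm m = 1" "e \<bullet> m = 0" "n \<bullet> e = 0" "n \<bullet> m = 0"
  shows "reachable a R 1 (lifted_config X (\<tau> *\<^sub>R w \<alpha>))
    (lifted_config (X + (\<tau> * G (\<tau>\<^sup>2)) *\<^sub>R (w \<beta> - w \<alpha>)) (\<tau> *\<^sub>R w \<beta>))"
proof -
  define \<phi> where "\<phi> t = (1 - t) * \<alpha> + t * \<beta>" for t
  define w' where "w' \<phi> = cos \<phi> *\<^sub>R e - sin \<phi> *\<^sub>R m" for \<phi>
  have w_sq: "w \<phi> \<bullet> w \<phi> = 1" for \<phi>
    using em by (simp add: w_def inner_add_left inner_add_right inner_commute norm_eq_1 flip: power2_eq_square)
  have w: "((\<lambda>t. w (\<phi> t)) has_vector_derivative (\<beta> - \<alpha>) *\<^sub>R w' (\<phi> t)) (at t within S)" for t S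
    unfolding w_def w'_def \<phi>_def
    by (auto intro!: derivative_eq_intros simp: algebra_simps)
  have "reachable a R 1 (lifted_config X (\<tau> *\<^sub>R w (\<phi> 0)))
      (lifted_config (X + (G (\<tau>\<^sup>2) *\<^sub>R \<tau> *\<^sub>R w (\<phi> 1) - G (\<tau>\<^sup>2) *\<^sub>R \<tau> *\<^sub>R w (\<phi> 0))) (\<tau> *\<^sub>R w (\<phi> 1)))"
  proof (rule reachable_along_path)
    fix t :: real assume t: "t \<in> {0..1}"
    show "((\<lambda>t. \<tau> *\<^sub>R w (\<phi> t)) has_vector_derivative \<tau> *\<^sub>R (\<beta> - \<alpha>) *\<^sub>R w' (\<phi> t)) (at t within {0..1})"
      using has_vector_derivative_scaleR[OF DERIV_const w] by simp
    show "n \<bullet> (\<tau> *\<^sub>R w (\<phi> t)) = 0 \<and> n \<bullet> (\<tau> *\<^sub>R (\<beta> - \<alpha>) *\<^sub>R w' (\<phi> t)) = 0"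
      using em by (simp add: w_def w'_def inner_add_right inner_diff_right)
    show "admissible (\<tau> *\<^sub>R w (\<phi> t) \<bullet> \<tau> *\<^sub>R w (\<phi> t))"
      using adm w_sq by (simp add: power2_eq_square)
    show "((\<lambda>t. G (\<tau>\<^sup>2) *\<^sub>R \<tau> *\<^sub>R w (\<phi> t)) has_vector_derivative
        G (\<tau> *\<^sub>R w (\<phi> t) \<bullet> \<tau> *\<^sub>R w (\<phi> t)) *\<^sub>R \<tau> *\<^sub>R (\<beta> - \<alpha>) *\<^sub>R w' (\<phi> t)) (at t within {0..1})"
      using w_sq by (auto intro!: derivative_eq_intros w simp: power2_eq_square)
  next
    show "continuous_on {0..1} (\<lambda>t. \<tau> *\<^sub>R (\<beta> - \<alpha>) *\<^sub>R w' (\<phi> t))"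
      unfolding w'_def \<phi>_def by (intro continuous_intros)
  qed
  then show ?thesis
    by (simp add: \<phi>_def scaleR_diff_right mult.commute)
qed

lemma reachable_loop:
  fixes e m :: vec3 and \<theta> :: real
  assumes adm: "\<forall>z\<in>{0..\<tau>\<^sup>2}. admissible z" and "0 \<le> \<tau>"
    and em: "norm e = 1" "norm m = 1" "e \<bullet> m = 0" "n \<bullet> e = 0" "n \<bullet> m = 0"
  defines "v \<equiv> (2 * sin \<theta> * (Gint \<tau> - \<tau> * G (\<tau>\<^sup>2))) *\<^sub>R e"
  shows "reachable a R 3 (lifted_config X 0) (lifted_config X 0 + (v, v, v))"
proof -
  define w where "w \<phi> = sin \<phi> *\<^sub>R e + cos \<phi> *\<^sub>R m" for \<phi>
  have w: "norm (w \<phi>) = 1" "n \<bullet> w \<phi> = 0" for \<phi>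
    using em by (simp_all add: w_def norm_eq_sqrt_inner inner_add_left inner_add_right inner_commute
        norm_eq_1 flip: power2_eq_square)
  have \<tau>: "0 \<in> {0..\<tau>}" "\<tau> \<in> {0..\<tau>}" "admissible (\<tau>\<^sup>2)"
    using adm \<open>0 \<le> \<tau>\<close> by auto
  define X\<^sub>1 where "X\<^sub>1 = X + Gint \<tau> *\<^sub>R w \<theta>"
  define X\<^sub>2 where "X\<^sub>2 = X\<^sub>1 + (\<tau> * G (\<tau>\<^sup>2)) *\<^sub>R (w (- \<theta>) - w \<theta>)"
  have Gint_0: "Gint 0 = 0"
    by (simp add: Gint_def)
  have "reachable a R 1 (lifted_config X 0) (lifted_config X\<^sub>1 (\<tau> *\<^sub>R w \<theta>))"
    using reachable_radial[OF adm \<tau>(1,2) w, of X] by (simp add: X\<^sub>1_def Gint_0)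
  moreover have "reachable a R 1 (lifted_config X\<^sub>1 (\<tau> *\<^sub>R w \<theta>)) (lifted_config X\<^sub>2 (\<tau> *\<^sub>R w (- \<theta>)))"
    unfolding X\<^sub>2_def w_def by (rule reachable_arc[OF \<tau>(3) em])
  moreover have "reachable a R 1 (lifted_config X\<^sub>2 (\<tau> *\<^sub>R w (- \<theta>)))
      (lifted_config (X\<^sub>2 - Gint \<tau> *\<^sub>R w (- \<theta>)) 0)"
    using reachable_radial[OF adm \<tau>(2,1) w, of X\<^sub>2] by (simp add: Gint_0)
  ultimately have "reachable a R (1 + 1 + 1) (lifted_config X 0)
      (lifted_config (X\<^sub>2 - Gint \<tau> *\<^sub>R w (- \<theta>)) 0)"
    by (blast intro: reachable_trans)
  moreover have "X\<^sub>2 - Gint \<tau> *\<^sub>R w (- \<theta>) = X + v"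
    by (simp add: X\<^sub>2_def X\<^sub>1_def v_def w_def algebra_simps flip: scaleR_2)
  ultimately show ?thesis
    by (simp add: lifted_config_translate)
qed

lemma eventually_admissible: "\<forall>\<^sub>F z in nhds 0. 0 \<le> z \<longrightarrow> admissible z"
proof -
  have "0 < A"
    using \<rho>\<^sub>0_noncritical by (simp add: A_def c_def)
  then have "\<forall>\<^sub>F z in nhds 0. 0 < A - Q * z"
    by (intro isCont_eventually_greater) simp_all
  moreover have "\<forall>\<^sub>F z in nhds 0. R < rho z"
    using R_less_\<rho>\<^sub>0 by (intro isCont_eventually_greater isCont_rho) (simp add: rho_0)
  moreover have "\<forall>\<^sub>F z in nhds 0. R < 2 * lam z"
    using R_pos R_less_\<rho>\<^sub>0 isCont_rho
    by (intro isCont_eventually_greater) (auto simp: lam_def rho_0 intro!: continuous_intros)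
  ultimately show ?thesis
    by eventually_elim (simp add: admissible_def)
qed

lemma G'_sign:
  assumes z: "admissible z" and P: "0 < \<sigma> * ((3 * c - 2 * rho z) * (c - rho z))"
  shows "0 < \<sigma> * G' z"
proof -
  define K where "K = c * (rho z)\<^sup>2 / (2 * sqrt (1 + z) ^ 3 * (c - rho z) ^ 4)"
  have "c - rho z \<noteq> 0"
    using rho_ne_c[of z] z by (simp add: admissible_def)
  moreover have "\<sigma> * (x * y / (W * d ^ 3)) = x / (W * d ^ 4) * (\<sigma> * (y * d))" if "d \<noteq> 0" for x y W d :: real
    using that by (simp add: power4_eq_xxxx power3_eq_cube mult_ac)
  ultimately have "\<sigma> * G' z = K * (\<sigma> * ((3 * c - 2 * rho z) * (c - rho z)))"
    unfolding G'_def K_def by blast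
  moreover have "0 < K"
    using z c_pos admissible_rho_pos[OF z] rho_ne_c[of z] by (auto simp: K_def admissible_def add_nonneg_pos)
  ultimately show ?thesis
    using P by (metis mult_pos_pos)
qed

lemma eventually_G'_sign:
  obtains \<sigma> :: real where "\<sigma> = 1 \<or> \<sigma> = -1"
    and "\<forall>\<^sub>F z in nhds 0. 0 < z \<longrightarrow> admissible z \<longrightarrow> 0 < \<sigma> * G' z"
proof (cases "\<rho>\<^sub>0 = 3 * c / 2")
  case True
  \<comment> \<open>Here the factor 3 c - 2 rho z of G' z vanishes at z = 0, but c < rho z < 3 c / 2 for z > 0.\<close>
  have "0 < -1 * ((3 * c - 2 * rho z) * (c - rho z))" if z: "0 < z" "admissible z" for z
  proof -
    have "sgn (\<rho>\<^sub>0 - c) = 1" "0 < Q" "A = (c / 2)\<^sup>2"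
      using True c_pos by (simp_all add: Q_def A_def)
    moreover have "sqrt (A - Q * z) < sqrt A" "0 < sqrt (A - Q * z)"
      using z \<open>0 < Q\<close> by (simp_all add: admissible_def)
    ultimately have "c < rho z" "rho z < 3 * c / 2"
      using c_pos by (simp_all add: rho_def)
    then show ?thesis
      by (simp add: mult_pos_neg)
  qed
  then show ?thesis
    using G'_sign[of _ "-1"] by (intro that[of "-1"] always_eventually) auto
next
  case False
  define P where "P z = (3 * c - 2 * rho z) * (c - rho z)" for z
  have "P 0 \<noteq> 0"
    using False \<rho>\<^sub>0_noncritical by (auto simp: P_def rho_0 c_def)
  then have "0 < sgn (P 0) * P 0"
    by (auto simp: sgn_if)
  moreover have "isCont (\<lambda>z. sgn (P 0) * P z) 0"
    unfolding P_def using isCont_rho by (intro continuous_intros)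
  ultimately have "\<forall>\<^sub>F z in nhds 0. 0 < sgn (P 0) * P z"
    by (intro isCont_eventually_greater)
  then have "\<forall>\<^sub>F z in nhds 0. 0 < z \<longrightarrow> admissible z \<longrightarrow> 0 < sgn (P 0) * G' z"
    by eventually_elim (use G'_sign in \<open>auto simp: P_def\<close>)
  moreover have "sgn (P 0) = 1 \<or> sgn (P 0) = -1"
    using \<open>P 0 \<noteq> 0\<close> by (auto simp: sgn_if)
  ultimately show ?thesis
    using that by blast
qed

lemma Gint_ne_if_G'_sign:
  assumes "0 < \<tau>" and adm: "\<forall>z\<in>{0..\<tau>\<^sup>2}. admissible z"
    and \<sigma>: "\<sigma> = 1 \<or> \<sigma> = -1" and G': "\<forall>z\<in>{0<..<\<tau>\<^sup>2}. 0 < \<sigma> * G' z"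
  shows "Gint \<tau> \<noteq> \<tau> * G (\<tau>\<^sup>2)"
proof -
  define k where "k s = \<sigma> * (Gint s - s * G (s\<^sup>2))" for s
  have "k \<tau> < k 0"
  proof (rule DERIV_neg_imp_decreasing_open[OF \<open>0 < \<tau>\<close>])
    fix s assume s: "0 < s" "s < \<tau>"
    then have "s\<^sup>2 \<in> {0<..<\<tau>\<^sup>2}"
      by (auto intro: power_strict_mono)
    then have adm_s: "admissible (s\<^sup>2)" and "0 < \<sigma> * G' (s\<^sup>2)"
      using adm G' by auto
    have Gint': "(Gint has_real_derivative G (s\<^sup>2)) (at s)"
      using Gint_has_derivative[OF adm, of s] s at_within_interior[of s "{0..\<tau>}"] by simp
    have G_sq': "((\<lambda>s. G (s\<^sup>2)) has_real_derivative G' (s\<^sup>2) * (2 * s)) (at s)"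
      using DERIV_chain2[OF G_has_derivative[OF adm_s] DERIV_power[OF DERIV_ident, of 2 s]] by simp
    have "(k has_real_derivative \<sigma> * (G (s\<^sup>2) - (1 * G (s\<^sup>2) + G' (s\<^sup>2) * (2 * s) * s))) (at s)"
      unfolding k_def[abs_def] by (intro DERIV_cmult DERIV_diff Gint' DERIV_mult[OF DERIV_ident G_sq'])
    moreover have "\<sigma> * (G (s\<^sup>2) - (1 * G (s\<^sup>2) + G' (s\<^sup>2) * (2 * s) * s)) = - 2 * s\<^sup>2 * (\<sigma> * G' (s\<^sup>2))"
      by (simp add: algebra_simps power2_eq_square)
    moreover have "- 2 * s\<^sup>2 * (\<sigma> * G' (s\<^sup>2)) < 0"
      using s \<open>0 < \<sigma> * G' (s\<^sup>2)\<close> by (simp add: mult_pos_pos)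
    ultimately show "\<exists>y. (k has_real_derivative y) (at s) \<and> y < 0"
      by metis
  next
    have "continuous_on {0..\<tau>} Gint"
      unfolding Gint_def[abs_def]
      by (rule indefinite_integral_continuous_1[OF integrable_continuous_real[OF continuous_on_G_sq[OF adm]]])
    then show "continuous_on {0..\<tau>} k"
      unfolding k_def using continuous_on_G_sq[OF adm] by (intro continuous_intros)
  qed
  then show ?thesis
    using \<sigma> by (auto simp: k_def Gint_def)
qed

lemma exists_loop_radius:
  obtains \<tau> where "0 < \<tau>" "\<forall>z\<in>{0..\<tau>\<^sup>2}. admissible z" "Gint \<tau> \<noteq> \<tau> * G (\<tau>\<^sup>2)"
proof -
  obtain \<sigma> :: real where \<sigma>: "\<sigma> = 1 \<or> \<sigma> = -1"
    and "\<forall>\<^sub>F z in nhds 0. 0 < z \<longrightarrow> admissible z \<longrightarrow> 0 < \<sigma> * G' z"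
    by (rule eventually_G'_sign)
  from eventually_conj[OF this(2) eventually_admissible]
  obtain d where "0 < d"
    and d: "\<forall>z. \<bar>z\<bar> \<le> d \<longrightarrow> (0 < z \<longrightarrow> admissible z \<longrightarrow> 0 < \<sigma> * G' z) \<and> (0 \<le> z \<longrightarrow> admissible z)"
    unfolding eventually_nhds_metric_le dist_real_def by auto
  define \<tau> where "\<tau> = sqrt d"
  have "0 < \<tau>" "\<tau>\<^sup>2 = d"
    using \<open>0 < d\<close> by (simp_all add: \<tau>_def)
  moreover have adm: "\<forall>z\<in>{0..\<tau>\<^sup>2}. admissible z"
    using d \<open>\<tau>\<^sup>2 = d\<close> by auto
  moreover have "\<forall>z\<in>{0<..<\<tau>\<^sup>2}. 0 < \<sigma> * G' z"
    using d \<open>\<tau>\<^sup>2 = d\<close> by auto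
  ultimately show ?thesis
    using Gint_ne_if_G'_sign[OF \<open>0 < \<tau>\<close> adm \<sigma>] that by blast
qed

lemma reachable_translation:
  fixes e X :: vec3 and l :: real
  assumes e: "norm e = 1" "n \<bullet> e = 0"
  obtains T where "0 < T"
    "reachable a R T (lifted_config X 0) (lifted_config X 0 + (l *\<^sub>R e, l *\<^sub>R e, l *\<^sub>R e))"
proof -
  obtain \<tau> where "0 < \<tau>" and adm: "\<forall>z\<in>{0..\<tau>\<^sup>2}. admissible z" and "Gint \<tau> \<noteq> \<tau> * G (\<tau>\<^sup>2)"
    by (rule exists_loop_radius)
  define \<kappa> where "\<kappa> = Gint \<tau> - \<tau> * G (\<tau>\<^sup>2)"
  have "\<kappa> \<noteq> 0"
    using \<open>Gint \<tau> \<noteq> \<tau> * G (\<tau>\<^sup>2)\<close> by (simp add: \<kappa>_def)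
  define m where "m = cross3 n e"
  have "(norm m)\<^sup>2 = 1"
    using norm_cross_dot[of n e] n_unit e by (simp add: m_def)
  then have "norm m = 1"
    using norm_ge_zero[of m] by (auto simp: power2_eq_1_iff)
  moreover have "e \<bullet> m = 0" "n \<bullet> m = 0"
    by (simp_all add: m_def dot_cross_self)
  ultimately have m: "norm m = 1" "e \<bullet> m = 0" "n \<bullet> m = 0"
    by auto
  define N where "N = nat \<lceil>\<bar>l\<bar> / (2 * \<bar>\<kappa>\<bar>)\<rceil>"
  define s where "s = l / (2 * real (Suc N) * \<kappa>)"
  have "real (Suc N) * (2 * s * \<kappa>) = l * (2 * real (Suc N) * \<kappa>) / (2 * real (Suc N) * \<kappa>)"
    by (simp add: s_def mult_ac)
  then have "real (Suc N) * (2 * s * \<kappa>) = l"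
    using \<open>\<kappa> \<noteq> 0\<close> by simp
  have "\<bar>l\<bar> / (2 * \<bar>\<kappa>\<bar>) \<le> real (Suc N)"
    unfolding N_def by linarith
  then have "\<bar>l\<bar> \<le> 2 * real (Suc N) * \<bar>\<kappa>\<bar>"
    using \<open>\<kappa> \<noteq> 0\<close> by (simp add: field_simps)
  moreover have "\<bar>s\<bar> = \<bar>l\<bar> / (2 * real (Suc N) * \<bar>\<kappa>\<bar>)"
    by (simp add: s_def abs_mult)
  ultimately have "\<bar>s\<bar> \<le> 1"
    using \<open>\<kappa> \<noteq> 0\<close> by simp
  then have "sin (arcsin s) = s"
    by (simp add: sin_arcsin abs_le_iff)
  define v where "v = (2 * s * \<kappa>) *\<^sub>R e"
  have "reachable a R 3 (lifted_config X 0) (lifted_config X 0 + (v, v, v))"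
    using reachable_loop[OF adm _ e(1) m(1,2) e(2) m(3), of X "arcsin s"] \<open>0 < \<tau>\<close> \<open>sin (arcsin s) = s\<close>
    by (simp add: \<kappa>_def v_def)
  from reachable_repeat[OF this, of N]
  have "reachable a R (real (Suc N) * 3) (lifted_config X 0)
      (lifted_config X 0 + real (Suc N) *\<^sub>R (v, v, v))" .
  moreover have "real (Suc N) *\<^sub>R v = l *\<^sub>R e"
    using \<open>real (Suc N) * (2 * s * \<kappa>) = l\<close> by (simp add: v_def)
  ultimately show ?thesis
    by (intro that[of "real (Suc N) * 3"]) auto
qed

end

lemma reachable_translation_of_symmetric:
  fixes a R l :: real and x0 y10 y20 e :: vec3
  assumes "0 < a" and "0 < R" and sep: "sepR R x0 y10 y20"
    and sym: "y10 - x0 = - (y20 - x0)" and "0 < l" and e: "norm e = 1" "e \<bullet> (y10 - x0) = 0"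
  obtains T where "0 < T" "reachable a R T (x0, y10, y20) ((x0, y10, y20) + (l *\<^sub>R e, l *\<^sub>R e, l *\<^sub>R e))"
proof -
  define \<rho>\<^sub>0 where "\<rho>\<^sub>0 = norm (y10 - x0)"
  have "R < \<rho>\<^sub>0"
    using sep by (simp add: sepR_def \<rho>\<^sub>0_def dist_norm norm_minus_commute)
  then have "0 < \<rho>\<^sub>0"
    using \<open>0 < R\<close> by simp
  define n where "n = (1 / \<rho>\<^sub>0) *\<^sub>R (y10 - x0)"
  have n: "norm n = 1" "n \<bullet> e = 0"
    using \<open>0 < \<rho>\<^sub>0\<close> e by (simp_all add: n_def \<rho>\<^sub>0_def inner_commute)
  have y10: "y10 = x0 + \<rho>\<^sub>0 *\<^sub>R n" and y20: "y20 = x0 - \<rho>\<^sub>0 *\<^sub>R n"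
    using \<open>0 < \<rho>\<^sub>0\<close> sym by (simp_all add: n_def algebra_simps)
  show ?thesis
  proof (cases "\<rho>\<^sub>0 = 3 * a / 4")
    case True
    then have "3 * a / (4 * \<rho>\<^sub>0) = 1"
      using \<open>0 < \<rho>\<^sub>0\<close> by simp
    then have "stokeslet a (y10 - x0) e = e" "stokeslet a (y20 - x0) e = e"
      using \<open>0 < \<rho>\<^sub>0\<close> n by (simp_all add: y10 y20 stokeslet_def inner_commute)
    with reachable_rigid_translation[OF sep] \<open>0 < l\<close> show ?thesis
      by (intro that) auto
  next
    case False
    interpret stokes_loop a R \<rho>\<^sub>0 n
      using \<open>0 < a\<close> \<open>0 < R\<close> \<open>R < \<rho>\<^sub>0\<close> False n by unfold_locales
    show ?thesis
      using reachable_translation[OF e(1) n(2), of x0 l] that by (simp add: lifted_config_0 y10 y20) blast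
  qed
qed

lemma reachable_imp_solution:
  assumes "0 < T" and "reachable a R T (x0, y10, y20) (x1, y11, y21)"
  shows "\<exists>T > 0. \<exists>u :: real \<Rightarrow> vec3. \<exists>x y1 y2 :: real \<Rightarrow> vec3.
           u \<in> borel_measurable (lebesgue_on {0..T}) \<and>
           (\<exists>B. \<forall>t\<in>{0..T}. norm (u t) \<le> B) \<and>
           (\<forall>t\<in>{0..T}.
              (u has_integral (x t - x0)) {0..t} \<and>
              ((\<lambda>s. stokeslet a (y1 s - x s) (u s)) has_integral (y1 t - y10)) {0..t} \<and>
              ((\<lambda>s. stokeslet a (y2 s - x s) (u s)) has_integral (y2 t - y20)) {0..t} \<and>
              sepR R (x t) (y1 t) (y2 t)) \<and>
           x T = x1 \<and> y1 T = y11 \<and> y2 T = y21"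
proof -
  obtain u x y1 y2 where traj: "controlled_traj a R T u x y1 y2"
    and "x 0 = x0" "y1 0 = y10" "y2 0 = y20" "x T = x1" "y1 T = y11" "y2 T = y21"
    using assms(2) by (auto simp: reachable_def)
  moreover have "u \<in> borel_measurable (lebesgue_on {0..T})"
  proof (rule integrable_imp_measurable)
    show "u integrable_on {0..T}"
      using traj \<open>0 < T\<close> by (auto simp: controlled_traj_def integrable_on_def)
  qed
  ultimately show ?thesis
    using \<open>0 < T\<close> unfolding controlled_traj_def by blast
qed

theorem proposition5:
  fixes a R l :: real and x0 y10 y20 e :: vec3
  assumes "a > 0" and "R > 0"
    and "sepR R x0 y10 y20"
    and "y10 - x0 = - (y20 - x0)"
    and "l > 0" and "norm e = 1" and "e \<bullet> (y10 - x0) = 0"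
  shows "\<exists>T > 0. \<exists>u :: real \<Rightarrow> vec3. \<exists>x y1 y2 :: real \<Rightarrow> vec3.
           u \<in> borel_measurable (lebesgue_on {0..T}) \<and>
           (\<exists>B. \<forall>t\<in>{0..T}. norm (u t) \<le> B) \<and>
           (\<forall>t\<in>{0..T}.
              (u has_integral (x t - x0)) {0..t} \<and>
              ((\<lambda>s. stokeslet a (y1 s - x s) (u s)) has_integral (y1 t - y10)) {0..t} \<and>
              ((\<lambda>s. stokeslet a (y2 s - x s) (u s)) has_integral (y2 t - y20)) {0..t} \<and>
              sepR R (x t) (y1 t) (y2 t)) \<and>
           x T = x0 + l *\<^sub>R e \<and> y1 T = y10 + l *\<^sub>R e \<and> y2 T = y20 + l *\<^sub>R e"
proof -
  obtain T where "0 < T" "reachable a R T (x0, y10, y20) ((x0, y10, y20) + (l *\<^sub>R e, l *\<^sub>R e, l *\<^sub>R e))"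
    using reachable_translation_of_symmetric[OF assms] by blast
  then show ?thesis
    by (intro reachable_imp_solution) simp_all
qed

end
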